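(* For positive integers $m,n$ and $h$ with $m \ge h$ and $n\ge h$, \[ \sum_{k=0}^{h} q^{(n-k)(h-k)} \left( \overline{{ n \brack k}}_{q,t} \overline{{ m \brack h-k}}_{q,t} + t\, \overline{{ n-1 \brack k}}_{q,t} \overline{{ m-1 \brack h-k-1}}_{q,t} \right) = \overline{ {m+n \brack h}}_{q,t}. \]
   Context: An overpartition is a partition in which the last occurrence of each distinct part size may be overlined; its weight $|\lambda|$ is the sum of its parts. For integers $0\le b\le a$, $\overline{{a \brack b}}_{q,t}=\sum_{\lambda} t^{\#_o(\lambda)} q^{|\lambda|}$, the sum over all overpartitions $\lambda$ with largest part at most $a-b$ and at most $b$ parts, $\#_o(\lambda)$ being the number of overlined parts; for other integer pairs $(a,b)$ (e.g. $b<0$ or $b>a$) it is $0$. *)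

theory Defs
  imports Main "HOL-Library.Multiset"
begin

text \<open>An overpartition is represented as a pair (P, V): the multiset P of its
(positive) parts, and the set V of those distinct part sizes whose last occurrence
is overlined (so V is a subset of the set of part sizes).\<close>

definition overpartitions :: "nat \<Rightarrow> nat \<Rightarrow> (nat multiset \<times> nat set) set" where
  "overpartitions L N =
     {(P, V). (\<forall>x\<in>#P. 0 < x \<and> x \<le> L) \<and> size P \<le> N \<and> V \<subseteq> set_mset P}"

definition qt_binom :: "'a::comm_ring_1 \<Rightarrow> 'a \<Rightarrow> int \<Rightarrow> int \<Rightarrow> 'a" where
  "qt_binom q t a b =
     (if 0 \<le> b \<and> b \<le> a then
        (\<Sum>(P, V)\<in>overpartitions (nat (a - b)) (nat b). t ^ card V * q ^ sum_mset P)
      else 0)"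

end

theory Submission
  imports Defs
begin

text \<open>Sorting the overpartitions in the box by the parts equal to the largest allowed size
L = a - b gives the recurrence [a, b] = [a-1, b] + q^(a-b) ([a-1, b-1] + t [a-2, b-1]): either no part equals L,
or one copy of L is removed, and that copy carries the overline exactly when it was the only
one and was overlined. Each summand on the left-hand side is a fixed linear combination of
[m, j] and [m-1, j-1], so it obeys the same recurrence in m; the shift of h by one is absorbed
by the factor q^((n-k)(h-k)). Both sides therefore agree by induction on m, starting from
m = 0 and m = 1.\<close>

lemma finite_overpartitions: "finite (overpartitions L N)"
proof (rule finite_subset)
  show "overpartitions L N \<subseteq> (\<Union>k\<le>N. multisets_of_size {0..L} k) \<times> Pow {0..L}"
    by (fastforce simp: overpartitions_def multisets_of_size_def)
qed auto

lemma overpartitions_0_left: "overpartitions 0 N = {({#}, {})}"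
proof -
  have "P = {#}" if "\<forall>x\<in>#P. 0 < x \<and> x \<le> (0::nat)" for P
    using that by (cases P) auto
  then show ?thesis by (auto simp: overpartitions_def)
qed

lemma overpartitions_0_right: "overpartitions L 0 = {({#}, {})}"
  by (auto simp: overpartitions_def)

lemma overpartitions_decompose:
  assumes "0 < L" "0 < N"
  shows "overpartitions L N = overpartitions (L - 1) N
     \<union> (\<lambda>(P, V). (add_mset L P, V)) ` overpartitions L (N - 1)
     \<union> (\<lambda>(P, V). (add_mset L P, insert L V)) ` overpartitions (L - 1) (N - 1)"
    (is "_ = ?A \<union> ?B \<union> ?C")
proof (intro equalityI subsetI)
  fix x assume "x \<in> overpartitions L N"
  then obtain P V where x: "x = (P, V)" and parts: "\<forall>y\<in>#P. 0 < y \<and> y \<le> L"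
    and size: "size P \<le> N" and V: "V \<subseteq> set_mset P"
    by (auto simp: overpartitions_def)
  consider "L \<notin># P" | "L \<in># P" "L \<in> V" "L \<notin># P - {#L#}"
    | "L \<in># P" "L \<notin> V \<or> L \<in># P - {#L#}"
    by blast
  then show "x \<in> ?A \<union> ?B \<union> ?C"
  proof cases
    case 1
    have "\<forall>y\<in>#P. 0 < y \<and> y \<le> L - 1"
    proof
      fix y assume y: "y \<in># P"
      then have "y \<noteq> L" using 1 by auto
      then show "0 < y \<and> y \<le> L - 1"
        using parts y by fastforce
    qed
    then have "x \<in> ?A"
      using x size V by (simp add: overpartitions_def)
    then show ?thesis by blast
  next
    case 2
    have set_P': "set_mset (P - {#L#}) = set_mset P - {L}"
      using 2(3) by (rule at_most_one_mset_mset_diff)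
    have "\<forall>y\<in>#P - {#L#}. 0 < y \<and> y \<le> L - 1"
    proof
      fix y assume y: "y \<in># P - {#L#}"
      then have "y \<noteq> L" using 2 by auto
      then show "0 < y \<and> y \<le> L - 1"
        using parts in_diffD[OF y] by fastforce
    qed
    then have "(P - {#L#}, V - {L}) \<in> overpartitions (L - 1) (N - 1)"
      using size V 2 set_P' by (auto simp: overpartitions_def size_Diff_singleton)
    moreover have "x = (add_mset L (P - {#L#}), insert L (V - {L}))"
      using x 2 by (simp add: insert_absorb)
    ultimately show ?thesis
      by (intro UnI2 image_eqI[where x="(P - {#L#}, V - {L})"]) simp_all
  next
    case 3
    have "V \<subseteq> set_mset (P - {#L#})"
    proof (cases "L \<in># P - {#L#}")
      case True
      then show ?thesis using V more_than_one_mset_mset_diff[OF True] by simp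
    next
      case False
      then show ?thesis using V 3 at_most_one_mset_mset_diff[OF False] by auto
    qed
    then have "(P - {#L#}, V) \<in> overpartitions L (N - 1)"
      using size parts 3 by (auto simp: overpartitions_def size_Diff_singleton dest: in_diffD)
    moreover have "x = (add_mset L (P - {#L#}), V)"
      using x 3 by simp
    ultimately have "x \<in> ?B"
      by (intro image_eqI[where x="(P - {#L#}, V)"]) simp_all
    then show ?thesis by blast
  qed
next
  fix x assume "x \<in> ?A \<union> ?B \<union> ?C"
  then show "x \<in> overpartitions L N"
  proof (elim UnE)
    assume "x \<in> ?A"
    then show ?thesis by (auto simp: overpartitions_def)
  next
    assume "x \<in> ?B"
    then show ?thesis using assms by (auto simp: overpartitions_def)
  next
    assume "x \<in> ?C"
    then show ?thesis using assms by (force simp: overpartitions_def)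
  qed
qed

definition overpartition_gf :: "'a::comm_ring_1 \<Rightarrow> 'a \<Rightarrow> nat \<Rightarrow> nat \<Rightarrow> 'a" where
  "overpartition_gf q t L N = (\<Sum>(P, V)\<in>overpartitions L N. t ^ card V * q ^ sum_mset P)"

lemma overpartition_gf_rec:
  assumes "0 < L" "0 < N"
  shows "overpartition_gf q t L N = overpartition_gf q t (L - 1) N
           + q ^ L * (overpartition_gf q t L (N - 1) + t * overpartition_gf q t (L - 1) (N - 1))"
proof -
  let ?w = "\<lambda>(P, V). t ^ card V * q ^ sum_mset P"
  let ?add = "\<lambda>(P, V). (add_mset L P, V)"
  let ?add_overlined = "\<lambda>(P, V). (add_mset L P, insert L V)"
  let ?A = "overpartitions (L - 1) N"
  let ?B = "?add ` overpartitions L (N - 1)"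
  let ?C = "?add_overlined ` overpartitions (L - 1) (N - 1)"
  have no_L: "L \<notin># P" "L \<notin> V" "finite V" if "(P, V) \<in> overpartitions (L - 1) N'" for P V N'
  proof -
    have "L \<notin># P" "V \<subseteq> set_mset P"
      using that assms by (fastforce simp: overpartitions_def)+
    then show "L \<notin># P" "L \<notin> V" "finite V"
      by (auto intro: finite_subset)
  qed
  have not_A: "L \<notin># fst x" if "x \<in> ?A" for x
    using that no_L by (cases x) auto
  have in_B: "L \<in># fst x \<and> snd x \<subseteq> set_mset (fst x - {#L#})" if "x \<in> ?B" for x
    using that by (auto simp: overpartitions_def)
  have in_C: "L \<in># fst x \<and> L \<in> snd x \<and> L \<notin># fst x - {#L#}" if "x \<in> ?C" for x
    using that no_L by auto
  have disjoint: "?A \<inter> ?B = {}" "(?A \<union> ?B) \<inter> ?C = {}"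
    unfolding disjoint_iff using not_A in_B in_C by blast+
  have inj_add: "inj_on ?add (overpartitions L (N - 1))"
    by (auto simp: inj_on_def)
  have inj_add_overlined: "inj_on ?add_overlined (overpartitions (L - 1) (N - 1))"
  proof (rule inj_onI, clarify)
    fix P V P' V'
    assume "(P, V) \<in> overpartitions (L - 1) (N - 1)" "(P', V') \<in> overpartitions (L - 1) (N - 1)"
      and "add_mset L P = add_mset L P'" "insert L V = insert L V'"
    then show "P = P' \<and> V = V'"
      using no_L by (simp add: insert_ident)
  qed
  have fin: "finite ?A" "finite ?B" "finite ?C"
    by (simp_all add: finite_overpartitions)
  have "overpartition_gf q t L N = sum ?w ?A + sum ?w ?B + sum ?w ?C"
    unfolding overpartition_gf_def overpartitions_decompose[OF assms]
    using fin disjoint by (simp add: sum.union_disjoint)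
  also have "sum ?w ?B = q ^ L * overpartition_gf q t L (N - 1)"
    unfolding sum.reindex[OF inj_add] overpartition_gf_def sum_distrib_left
    by (rule sum.cong) (auto simp: power_add mult_ac)
  also have "sum ?w ?C = q ^ L * (t * overpartition_gf q t (L - 1) (N - 1))"
    unfolding sum.reindex[OF inj_add_overlined] overpartition_gf_def sum_distrib_left
    by (rule sum.cong) (auto simp: no_L power_add mult_ac)
  finally show ?thesis
    by (simp add: overpartition_gf_def distrib_left add.assoc)
qed

lemma qt_binom_eq_gf:
  "0 \<le> b \<Longrightarrow> b \<le> a \<Longrightarrow> qt_binom q t a b = overpartition_gf q t (nat (a - b)) (nat b)"
  by (simp add: qt_binom_def overpartition_gf_def)

lemma qt_binom_eq_0: "b < 0 \<or> a < b \<Longrightarrow> qt_binom q t a b = 0"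
  by (auto simp: qt_binom_def)

lemma qt_binom_nonzero_imp: "qt_binom q t a b \<noteq> 0 \<Longrightarrow> 0 \<le> b \<and> b \<le> a"
  by (auto simp: qt_binom_def split: if_splits)

lemma qt_binom_0_right: "0 \<le> a \<Longrightarrow> qt_binom q t a 0 = 1"
  by (simp add: qt_binom_eq_gf overpartition_gf_def overpartitions_0_right)

lemma qt_binom_diag: "0 \<le> a \<Longrightarrow> qt_binom q t a a = 1"
  by (simp add: qt_binom_eq_gf overpartition_gf_def overpartitions_0_left)

lemma qt_binom_rec:
  fixes a b :: int
  assumes "a \<noteq> 0 \<or> b \<noteq> 0"
  shows "qt_binom q t a b = qt_binom q t (a - 1) b
           + q ^ nat (a - b) * (qt_binom q t (a - 1) (b - 1) + t * qt_binom q t (a - 2) (b - 1))"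
proof -
  consider "b < 0 \<or> a < b" | "b = 0" "1 \<le> a" | "b = a" "1 \<le> a" | "1 \<le> b" "b < a"
    using assms by linarith
  then show ?thesis
  proof cases
    case 1
    then show ?thesis by (auto simp: qt_binom_eq_0)
  next
    case 2
    then show ?thesis by (simp add: qt_binom_0_right qt_binom_eq_0)
  next
    case 3
    then show ?thesis by (simp add: qt_binom_diag qt_binom_eq_0)
  next
    case 4
    then have "0 < nat (a - b)" "0 < nat b"
      by simp_all
    from overpartition_gf_rec[OF this, of q t] show ?thesis
      using 4 by (simp add: qt_binom_eq_gf nat_diff_distrib)
  qed
qed

definition qt_binom_combo :: "'a::comm_ring_1 \<Rightarrow> 'a \<Rightarrow> 'a \<Rightarrow> 'a \<Rightarrow> int \<Rightarrow> int \<Rightarrow> 'a" where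
  "qt_binom_combo q t x y a b = x * qt_binom q t a b + t * y * qt_binom q t (a - 1) (b - 1)"

lemma qt_binom_combo_rec:
  fixes a b :: int
  assumes "2 \<le> a"
  shows "qt_binom_combo q t x y a b = qt_binom_combo q t x y (a - 1) b
           + q ^ nat (a - b) *
               (qt_binom_combo q t x y (a - 1) (b - 1) + t * qt_binom_combo q t x y (a - 2) (b - 1))"
  using qt_binom_rec[of a b q t] qt_binom_rec[of "a - 1" "b - 1" q t] assms
  by (simp add: qt_binom_combo_def algebra_simps)

definition qt_convolution_term :: "'a::comm_ring_1 \<Rightarrow> 'a \<Rightarrow> int \<Rightarrow> nat \<Rightarrow> nat \<Rightarrow> nat \<Rightarrow> 'a" where
  "qt_convolution_term q t M n h k = q ^ ((n - k) * (h - k)) *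
     qt_binom_combo q t (qt_binom q t (int n) (int k)) (qt_binom q t (int n - 1) (int k)) M (int h - int k)"

definition qt_convolution :: "'a::comm_ring_1 \<Rightarrow> 'a \<Rightarrow> int \<Rightarrow> nat \<Rightarrow> nat \<Rightarrow> 'a" where
  "qt_convolution q t M n h = (\<Sum>k=0..h. qt_convolution_term q t M n h k)"

lemma qt_convolution_term_rec:
  fixes M :: int
  assumes "2 \<le> M" "k \<le> Suc h"
  shows "qt_convolution_term q t M n (Suc h) k = qt_convolution_term q t (M - 1) n (Suc h) k
           + q ^ nat (M + int n - int (Suc h)) *
               (qt_convolution_term q t (M - 1) n h k + t * qt_convolution_term q t (M - 2) n h k)"
proof -
  define x where "x = qt_binom q t (int n) (int k)"
  define y where "y = qt_binom q t (int n - 1) (int k)"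
  define j where "j = int (Suc h) - int k"
  let ?C = "qt_binom_combo q t x y"
  let ?X = "?C (M - 1) (j - 1) + t * ?C (M - 2) (j - 1)"
  have terms: "qt_convolution_term q t M' n (Suc h) k = q ^ ((n - k) * (Suc h - k)) * ?C M' j"
    "qt_convolution_term q t M' n h k = q ^ ((n - k) * (h - k)) * ?C M' (j - 1)" for M'
    by (simp_all add: qt_convolution_term_def x_def y_def j_def)
  \<comment> \<open>Where the term vanishes (k > n, or j outside 1..M) the exponents need not agree.\<close>
  have exponent: "(n - k) * (Suc h - k) + nat (M - j) = (n - k) * (h - k) + nat (M + int n - int (Suc h))"
    if "?X \<noteq> 0"
  proof -
    have "x \<noteq> 0 \<or> y \<noteq> 0"
      using that by (auto simp: qt_binom_combo_def)
    then have "k \<le> n"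
      unfolding x_def y_def by (auto dest: qt_binom_nonzero_imp)
    moreover have "1 \<le> j \<and> j \<le> M"
    proof (rule ccontr)
      assume "\<not> (1 \<le> j \<and> j \<le> M)"
      then have "?X = 0"
        by (auto simp: qt_binom_combo_def qt_binom_eq_0)
      with that show False ..
    qed
    ultimately have "Suc h - k = Suc (h - k)" "n - k + nat (M - j) = nat (M + int n - int (Suc h))"
      unfolding j_def by arith+
    then show ?thesis
      by simp
  qed
  have "qt_convolution_term q t M n (Suc h) k
      = q ^ ((n - k) * (Suc h - k)) * (?C (M - 1) j + q ^ nat (M - j) * ?X)"
    using qt_binom_combo_rec[OF assms(1), of q t x y j] by (simp add: terms)
  also have "\<dots> = qt_convolution_term q t (M - 1) n (Suc h) k
      + q ^ ((n - k) * (Suc h - k) + nat (M - j)) * ?X"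
    by (simp add: terms power_add distrib_left mult.assoc)
  also have "\<dots> = qt_convolution_term q t (M - 1) n (Suc h) k
      + q ^ ((n - k) * (h - k) + nat (M + int n - int (Suc h))) * ?X"
    using exponent by (cases "?X = 0") simp_all
  also have "\<dots> = qt_convolution_term q t (M - 1) n (Suc h) k
      + q ^ nat (M + int n - int (Suc h)) *
          (qt_convolution_term q t (M - 1) n h k + t * qt_convolution_term q t (M - 2) n h k)"
    by (simp add: terms power_add distrib_left mult_ac)
  finally show ?thesis .
qed

lemma qt_convolution_term_beyond: "qt_convolution_term q t M n h (Suc h) = 0"
  by (simp add: qt_convolution_term_def qt_binom_combo_def qt_binom_eq_0)

lemma qt_convolution_rec:
  fixes M :: int
  assumes "2 \<le> M"
  shows "qt_convolution q t M n (Suc h) = qt_convolution q t (M - 1) n (Suc h)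
           + q ^ nat (M + int n - int (Suc h)) *
               (qt_convolution q t (M - 1) n h + t * qt_convolution q t (M - 2) n h)"
proof -
  have extend: "qt_convolution q t M' n h = (\<Sum>k=0..Suc h. qt_convolution_term q t M' n h k)" for M'
    by (simp add: qt_convolution_def qt_convolution_term_beyond)
  have "qt_convolution q t M n (Suc h) = (\<Sum>k=0..Suc h. qt_convolution_term q t (M - 1) n (Suc h) k
      + q ^ nat (M + int n - int (Suc h)) *
          (qt_convolution_term q t (M - 1) n h k + t * qt_convolution_term q t (M - 2) n h k))"
    unfolding qt_convolution_def by (rule sum.cong) (simp_all add: qt_convolution_term_rec[OF assms])
  then show ?thesis
    unfolding qt_convolution_def[of q t "M - 1" n "Suc h"] extend[of "M - 1"] extend[of "M - 2"]
    by (simp add: sum.distrib sum_distrib_left distrib_left)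
qed

lemma qt_convolution_0_right: "0 \<le> M \<Longrightarrow> qt_convolution q t M n 0 = 1"
  by (simp add: qt_convolution_def qt_convolution_term_def qt_binom_combo_def
      qt_binom_0_right qt_binom_eq_0)

lemma qt_convolution_0_left: "qt_convolution q t 0 n h = qt_binom q t (int n) (int h)"
proof -
  have "qt_convolution_term q t 0 n h k = (if k = h then qt_binom q t (int n) (int h) else 0)" for k
    by (cases k h rule: linorder_cases)
      (simp_all add: qt_convolution_term_def qt_binom_combo_def qt_binom_diag qt_binom_eq_0)
  then show ?thesis
    by (simp add: qt_convolution_def)
qed

lemma qt_convolution_1_left:
  "qt_convolution q t 1 n (Suc h) = qt_binom q t (1 + int n) (int (Suc h))"
proof -
  let ?top = "qt_binom q t (int n) (int (Suc h))"
  let ?next = "q ^ (n - h) * (qt_binom q t (int n) (int h) + t * qt_binom q t (int n - 1) (int h))"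
  have "qt_convolution_term q t 1 n (Suc h) k
      = (if k = Suc h then ?top else 0) + (if k = h then ?next else 0)" for k
  proof -
    consider "k < h" | "k = h" | "k = Suc h" | "Suc h < k" by linarith
    then show ?thesis
      by cases (simp_all add: qt_convolution_term_def qt_binom_combo_def qt_binom_0_right
          qt_binom_diag qt_binom_eq_0)
  qed
  then have "qt_convolution q t 1 n (Suc h) = ?top + ?next"
    by (simp add: qt_convolution_def sum.distrib)
  also have "\<dots> = qt_binom q t (1 + int n) (int (Suc h))"
    using qt_binom_rec[of "1 + int n" "int (Suc h)" q t] by (simp add: nat_minus_as_int algebra_simps)
  finally show ?thesis .
qed

lemma qt_convolution_eq_qt_binom:
  "qt_convolution q t (int m) n h = qt_binom q t (int m + int n) (int h)"
proof (induction m arbitrary: h rule: less_induct)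
  case (less m)
  consider "h = 0" | "m = 0" | h' where "h = Suc h'" "m = 1" | h' where "h = Suc h'" "2 \<le> m"
    by (metis One_nat_def less_2_cases not_less0 not0_implies_Suc not_le)
  then show ?case
  proof cases
    case 1
    then show ?thesis by (simp add: qt_convolution_0_right qt_binom_0_right)
  next
    case 2
    then show ?thesis by (simp add: qt_convolution_0_left)
  next
    case 3
    then show ?thesis by (simp add: qt_convolution_1_left)
  next
    case (4 h')
    have "int m - 1 = int (m - 1)" "int m - 2 = int (m - 2)"
      using 4 by simp_all
    then show ?thesis
      using 4 qt_convolution_rec[of "int m" q t n h'] less.IH[of "m - 1"] less.IH[of "m - 2"]
        qt_binom_rec[of "int m + int n" "int (Suc h')" q t]
      by (simp add: algebra_simps)
  qed
qed

theorem proposition4p2: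
  fixes q t :: "'a::comm_ring_1" and m n h :: nat
  assumes "0 < m" "0 < n" "0 < h" "h \<le> m" "h \<le> n"
  shows "(\<Sum>k=0..h. q ^ ((n - k) * (h - k)) *
            (qt_binom q t (int n) (int k) * qt_binom q t (int m) (int h - int k)
             + t * qt_binom q t (int n - 1) (int k) * qt_binom q t (int m - 1) (int h - int k - 1)))
         = qt_binom q t (int m + int n) (int h)"
  \<comment> \<open>The identity holds for all m, n, h.\<close>
  using qt_convolution_eq_qt_binom[of q t m n h]
  by (simp add: qt_convolution_def qt_convolution_term_def qt_binom_combo_def mult.assoc)

end
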